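(* Suppose nature draws the true function $\bar g$ uniformly at random from $\mathcal{G}_{2k+1}$. Conditionally on $\bar g$, let $\bm{x}_1,\dots,\bm{x}_n$ be i.i.d. $\mathrm{Unif}[-1,1]^p$ and $\epsilon_1,\dots,\epsilon_n$ be i.i.d. $N(0,\sigma_\epsilon^2)$, independent of each other. Set $z_i=\bar g(\bm{x}_i)+\epsilon_i$ and $y_i=t(z_i)$, where $t:\mathbb{R}\to\mathcal{Y}$ is a fixed measurable function, and let $S'=\{(\bm{x}_i,y_i)\}_{i=1}^n$. Let $\hat g$ be any estimator, i.e. any (possibly randomized) function of $S'$ taking values in $\mathcal{G}_{2k+1}$. If $$n\le \Big(\log\Big(q^{k+1}\binom{p}{k+1}\Big)-2\log2\Big)\frac{\sigma_\epsilon^2}{2},$$ then $\mathbb{P}[\hat g\neq\bar g]\ge \tfrac12$.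
   Context: For $i=1,\dots,q$ let $\phi_i(z)=\sqrt2\cos(i\pi z)$ on $[-1,1]$. Let $p,q,k$ be positive integers with $k+1\le p$, and let $\mathcal{Y}\subseteq\mathbb{R}$. $\mathcal{G}_{2k+1}$ is the set of functions $g_\mathcal{A}(\bm{x})=\prod_{(i,j)\in\mathcal{A}}\phi_i(x_j)$ on $[-1,1]^p$, where $\mathcal{A}\subseteq\{1,\dots,q\}\times\{1,\dots,p\}$ satisfies: - $|\mathcal{A}|\le k+1$; - no two elements of $\mathcal{A}$ share the same second coordinate $j$. The empty product is the constant $1$. This is a restricted subclass of labeled binary trees that use only multiplication nodes and unit weights. *)

theory Defs
  imports "HOL-Probability.Probability"
begin

text \<open>Points of [-1,1]^p are represented as functions nat => real; coordinates 1..p are used.\<close>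

definition phi :: "nat \<Rightarrow> real \<Rightarrow> real" where
  "phi i z = sqrt 2 * cos (real i * pi * z)"

definition gA :: "(nat \<times> nat) set \<Rightarrow> (nat \<Rightarrow> real) \<Rightarrow> real" where
  "gA A x = (\<Prod>(i, j)\<in>A. phi i (x j))"

definition admissible :: "nat \<Rightarrow> nat \<Rightarrow> nat \<Rightarrow> (nat \<times> nat) set \<Rightarrow> bool" where
  "admissible p q k A \<longleftrightarrow> A \<subseteq> {1..q} \<times> {1..p} \<and> card A \<le> k + 1 \<and>
     (\<forall>a\<in>A. \<forall>b\<in>A. snd a = snd b \<longrightarrow> a = b)"

definition Gcls :: "nat \<Rightarrow> nat \<Rightarrow> nat \<Rightarrow> ((nat \<Rightarrow> real) \<Rightarrow> real) set" where
  "Gcls p q k = gA ` {A. admissible p q k A}"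

definition unif_cube :: "nat \<Rightarrow> (nat \<Rightarrow> real) measure" where
  "unif_cube p = PiM {1..p} (\<lambda>_. uniform_measure lborel {-1..1::real})"

definition gauss :: "real \<Rightarrow> real measure" where
  "gauss \<sigma> = density lborel (normal_density 0 \<sigma>)"

text \<open>Sample space: (true function, covariates x_1..x_n, noises eps_1..eps_n, estimator randomness).\<close>
definition sample_space ::
  "nat \<Rightarrow> nat \<Rightarrow> nat \<Rightarrow> nat \<Rightarrow> real \<Rightarrow> 'r measure \<Rightarrow>
   (((nat \<Rightarrow> real) \<Rightarrow> real) \<times> (nat \<Rightarrow> nat \<Rightarrow> real) \<times> (nat \<Rightarrow> real) \<times> 'r) measure" where
  "sample_space p q k n \<sigma> R =
     uniform_count_measure (Gcls p q k) \<Otimes>\<^sub>M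
     (PiM {..<n} (\<lambda>_. unif_cube p) \<Otimes>\<^sub>M (PiM {..<n} (\<lambda>_. gauss \<sigma>) \<Otimes>\<^sub>M R))"

definition data_space :: "nat \<Rightarrow> nat \<Rightarrow> (nat \<Rightarrow> (nat \<Rightarrow> real) \<times> real) measure" where
  "data_space p n = PiM {..<n} (\<lambda>_. PiM {1..p} (\<lambda>_. borel) \<Otimes>\<^sub>M (borel :: real measure))"

definition observed ::
  "nat \<Rightarrow> (real \<Rightarrow> real) \<Rightarrow> ((nat \<Rightarrow> real) \<Rightarrow> real) \<Rightarrow> (nat \<Rightarrow> nat \<Rightarrow> real) \<Rightarrow> (nat \<Rightarrow> real)
     \<Rightarrow> nat \<Rightarrow> (nat \<Rightarrow> real) \<times> real" where
  "observed n t g xs es = (\<lambda>i\<in>{..<n}. (xs i, t (g (xs i) + es i)))"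

end

theory Submission
  imports Defs
begin

text \<open>Fano's method. Draw \<open>g\<close> uniformly from the \<open>M\<close> functions of the class. Once the covariates
  \<open>x\<close> and the estimator's randomness are fixed, the estimator is a decoder of the Gaussian vector
  \<open>(g (x\<^sub>i))\<^sub>i + \<epsilon>\<close>, and a change of measure to the centred noise shows that the decoder is right
  with average probability at most \<open>(ln 2 + \<Sum>\<^sub>i g (x\<^sub>i)\<^sup>2 / (2\<sigma>\<^sup>2)) / ln M\<close>. Every function
  of the class has \<open>E g\<^sup>2 = 1\<close>, so averaging over the covariates bounds the success probability
  by \<open>(ln 2 + n / (2\<sigma>\<^sup>2)) / ln M\<close>; the graphs of the labellings \<open>J \<rightarrow> {1..q}\<close> of
  \<open>(k + 1)\<close>-sets \<open>J\<close> of coordinates give \<open>M \<ge> q\<^sup>k\<^sup>+\<^sup>1 (p choose (k + 1))\<close> distinct functions.\<close>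

section \<open>Shifted Gaussian vectors\<close>

lemma prob_space_gauss: "0 < \<sigma> \<Longrightarrow> prob_space (gauss \<sigma>)"
  unfolding gauss_def by (rule prob_space_normal_density)

lemma sets_gauss [measurable_cong, simp]: "sets (gauss \<sigma>) = sets borel"
  unfolding gauss_def by simp

lemma space_gauss [simp]: "space (gauss \<sigma>) = UNIV"
  unfolding gauss_def by simp

lemma distr_gauss_add:
  "distr (gauss \<sigma>) borel ((+) m) = density lborel (normal_density m \<sigma>)"
proof -
  have "density lborel (normal_density m \<sigma>) = density (distr lborel borel ((+) m)) (normal_density m \<sigma>)"
    by (simp add: lborel_distr_plus)
  also have "\<dots> = distr (density lborel (\<lambda>x. normal_density m \<sigma> (m + x))) borel ((+) m)"
    by (rule density_distr) simp_all
  also have "(\<lambda>x. normal_density m \<sigma> (m + x)) = normal_density 0 \<sigma>"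
    by (auto simp: normal_density_def fun_eq_iff)
  finally show ?thesis
    unfolding gauss_def by simp
qed

lemma emeasure_gauss_add_vimage:
  assumes "A \<in> sets borel"
  shows "emeasure (gauss \<sigma>) ((+) m -` A) = emeasure (density lborel (normal_density m \<sigma>)) A"
  using emeasure_distr[of "(+) m" "gauss \<sigma>" borel A] assms by (simp add: distr_gauss_add)

text \<open>The density of \<open>N(m, \<sigma>\<^sup>2)\<close> with respect to \<open>N(0, \<sigma>\<^sup>2)\<close>.\<close>

definition gauss_lr :: "real \<Rightarrow> real \<Rightarrow> real \<Rightarrow> real" where
  "gauss_lr \<sigma> m z = exp ((2 * z * m - m\<^sup>2) / (2 * \<sigma>\<^sup>2))"

lemma gauss_lr_pos: "0 < gauss_lr \<sigma> m z"
  by (simp add: gauss_lr_def)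

lemma borel_measurable_gauss_lr [measurable]: "gauss_lr \<sigma> m \<in> borel_measurable borel"
  unfolding gauss_lr_def by measurable

lemma normal_density_mult_gauss_lr:
  "normal_density 0 \<sigma> z * gauss_lr \<sigma> m z = normal_density m \<sigma> z"
proof -
  have "- z\<^sup>2 / (2 * \<sigma>\<^sup>2) + (2 * z * m - m\<^sup>2) / (2 * \<sigma>\<^sup>2) = - (z - m)\<^sup>2 / (2 * \<sigma>\<^sup>2)"
    by (simp add: power2_eq_square add_divide_distrib[symmetric] algebra_simps)
  then show ?thesis
    unfolding normal_density_def gauss_lr_def by (simp add: mult.assoc exp_add[symmetric])
qed

lemma nn_integral_gauss_lr_indicator:
  assumes "A \<in> sets borel"
  shows "(\<integral>\<^sup>+ z. ennreal (gauss_lr \<sigma> m z) * indicator A z \<partial>gauss \<sigma>)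
           = emeasure (density lborel (normal_density m \<sigma>)) A"
  unfolding gauss_def using assms
  by (simp add: nn_integral_density emeasure_density mult.assoc[symmetric]
      ennreal_mult'[symmetric] normal_density_mult_gauss_lr)

lemma integrable_gauss_id: "0 < \<sigma> \<Longrightarrow> integrable (gauss \<sigma>) (\<lambda>x. x)"
  unfolding gauss_def by (subst integrable_density) (auto intro: integrable_normal_moment_nz_1)

lemma integral_gauss_id: "0 < \<sigma> \<Longrightarrow> (\<integral>x. x \<partial>gauss \<sigma>) = 0"
  unfolding gauss_def by (subst integral_density) (auto simp: integral_normal_moment_nz_1)

definition gauss_vec :: "nat \<Rightarrow> real \<Rightarrow> (nat \<Rightarrow> real) measure" where
  "gauss_vec n \<sigma> = PiM {..<n} (\<lambda>_. gauss \<sigma>)"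

definition vec_shift :: "nat \<Rightarrow> (nat \<Rightarrow> real) \<Rightarrow> (nat \<Rightarrow> real) \<Rightarrow> nat \<Rightarrow> real" where
  "vec_shift n m e = (\<lambda>i\<in>{..<n}. m i + e i)"

definition vec_lr :: "nat \<Rightarrow> real \<Rightarrow> (nat \<Rightarrow> real) \<Rightarrow> (nat \<Rightarrow> real) \<Rightarrow> real" where
  "vec_lr n \<sigma> m z = (\<Prod>i<n. gauss_lr \<sigma> (m i) (z i))"

lemma space_gauss_vec: "space (gauss_vec n \<sigma>) = {..<n} \<rightarrow>\<^sub>E UNIV"
  by (simp add: gauss_vec_def space_PiM)

lemma sets_gauss_vec: "sets (gauss_vec n \<sigma>) = sets (PiM {..<n} (\<lambda>_. borel))"
  unfolding gauss_vec_def by (intro sets_PiM_cong) auto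

lemma prob_space_gauss_vec: "0 < \<sigma> \<Longrightarrow> prob_space (gauss_vec n \<sigma>)"
  unfolding gauss_vec_def by (intro prob_space_PiM prob_space_gauss)

lemma measurable_vec_shift: "vec_shift n m \<in> gauss_vec n \<sigma> \<rightarrow>\<^sub>M gauss_vec n \<sigma>"
  unfolding vec_shift_def gauss_vec_def
  by (intro measurable_restrict) (auto intro!: measurable_PiM_component_rev)

lemma borel_measurable_vec_lr [measurable]: "vec_lr n \<sigma> m \<in> borel_measurable (gauss_vec n \<sigma>)"
  unfolding vec_lr_def gauss_vec_def
  by (intro borel_measurable_prod) (auto intro!: measurable_PiM_component_rev)

lemma vec_lr_pos: "0 < vec_lr n \<sigma> m z"
  unfolding vec_lr_def by (intro prod_pos) (simp add: gauss_lr_pos)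

lemma indicator_PiE_eq_prod:
  assumes "z \<in> extensional I" "finite I"
  shows "(indicator (PiE I A) z :: ennreal) = (\<Prod>i\<in>I. indicator (A i) (z i))"
proof (cases "z \<in> PiE I A")
  case False
  then obtain i where "i \<in> I" "z i \<notin> A i"
    using assms(1) by (auto simp: PiE_iff)
  then have "(\<Prod>i\<in>I. (indicator (A i) (z i) :: ennreal)) = 0"
    using assms(2) by (intro prod_zero) (auto intro!: bexI[of _ i])
  with False show ?thesis
    by simp
qed (auto simp: PiE_iff)

lemma distr_vec_shift:
  assumes "0 < \<sigma>"
  shows "distr (gauss_vec n \<sigma>) (gauss_vec n \<sigma>) (vec_shift n m)
           = PiM {..<n} (\<lambda>i. density lborel (normal_density (m i) \<sigma>))"
proof -
  let ?N = "\<lambda>i. density lborel (normal_density (m i) \<sigma>)"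
  interpret N: product_prob_space ?N
    using assms by (intro product_prob_spaceI prob_space_normal_density)
  interpret G: product_prob_space "\<lambda>_. gauss \<sigma>"
    using assms by (intro product_prob_spaceI prob_space_gauss)
  show ?thesis
  proof (rule N.PiM_eqI)
    fix A assume A: "\<And>i. i \<in> {..<n} \<Longrightarrow> A i \<in> sets (?N i)"
    have "vec_shift n m -` PiE {..<n} A \<inter> space (gauss_vec n \<sigma>) = PiE {..<n} (\<lambda>i. (+) (m i) -` A i)"
      by (auto simp: vec_shift_def space_gauss_vec PiE_def Pi_def extensional_def)
    moreover have "(+) (m i) -` A i \<in> sets borel" if "i < n" for i
      using A that measurable_sets[of "(+) (m i)" borel borel "A i"] by auto
    ultimately have "emeasure (distr (gauss_vec n \<sigma>) (gauss_vec n \<sigma>) (vec_shift n m)) (PiE {..<n} A)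
        = (\<Prod>i<n. emeasure (gauss \<sigma>) ((+) (m i) -` A i))"
      using A unfolding gauss_vec_def
      by (subst emeasure_distr) (auto intro!: G.emeasure_PiM sets_PiM_I_finite
          measurable_vec_shift[unfolded gauss_vec_def])
    then show "emeasure (distr (gauss_vec n \<sigma>) (gauss_vec n \<sigma>) (vec_shift n m)) (PiE {..<n} A)
        = (\<Prod>i<n. emeasure (?N i) (A i))"
      using A by (simp add: emeasure_gauss_add_vimage)
  qed (simp_all add: sets_gauss_vec cong: sets_PiM_cong)
qed

lemma density_vec_lr:
  assumes "0 < \<sigma>"
  shows "density (gauss_vec n \<sigma>) (vec_lr n \<sigma> m)
           = PiM {..<n} (\<lambda>i. density lborel (normal_density (m i) \<sigma>))"
proof -
  let ?N = "\<lambda>i. density lborel (normal_density (m i) \<sigma>)"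
  interpret N: product_prob_space ?N
    using assms by (intro product_prob_spaceI prob_space_normal_density)
  interpret G: product_prob_space "\<lambda>_. gauss \<sigma>"
    using assms by (intro product_prob_spaceI prob_space_gauss)
  show ?thesis
  proof (rule N.PiM_eqI)
    fix A assume A: "\<And>i. i \<in> {..<n} \<Longrightarrow> A i \<in> sets (?N i)"
    have "emeasure (density (gauss_vec n \<sigma>) (vec_lr n \<sigma> m)) (PiE {..<n} A)
       = (\<integral>\<^sup>+ z. ennreal (vec_lr n \<sigma> m z) * indicator (PiE {..<n} A) z \<partial>gauss_vec n \<sigma>)"
      using A by (intro emeasure_density) (auto simp: sets_gauss_vec intro!: sets_PiM_I_finite)
    also have "\<dots> = (\<integral>\<^sup>+ z. (\<Prod>i<n. ennreal (gauss_lr \<sigma> (m i) (z i)) * indicator (A i) (z i)) \<partial>gauss_vec n \<sigma>)"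
    proof (intro nn_integral_cong)
      fix z assume "z \<in> space (gauss_vec n \<sigma>)"
      then have "z \<in> extensional {..<n}"
        by (simp add: space_gauss_vec PiE_def)
      then show "ennreal (vec_lr n \<sigma> m z) * indicator (PiE {..<n} A) z
          = (\<Prod>i<n. ennreal (gauss_lr \<sigma> (m i) (z i)) * indicator (A i) (z i))"
        by (simp add: vec_lr_def prod.distrib prod_ennreal gauss_lr_pos less_imp_le indicator_PiE_eq_prod)
    qed
    also have "\<dots> = (\<Prod>i<n. \<integral>\<^sup>+ z. ennreal (gauss_lr \<sigma> (m i) z) * indicator (A i) z \<partial>gauss \<sigma>)"
      unfolding gauss_vec_def using A
      by (intro G.product_nn_integral_prod) (auto simp: measurable_cong_sets[OF sets_gauss refl])
    finally show "emeasure (density (gauss_vec n \<sigma>) (vec_lr n \<sigma> m)) (PiE {..<n} A)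
        = (\<Prod>i<n. emeasure (?N i) (A i))"
      using A by (simp add: nn_integral_gauss_lr_indicator)
  qed (simp_all add: sets_gauss_vec cong: sets_PiM_cong)
qed

text \<open>Cameron--Martin for finitely many coordinates.\<close>

lemma nn_integral_vec_shift:
  assumes "0 < \<sigma>" and f: "f \<in> borel_measurable (gauss_vec n \<sigma>)"
  shows "(\<integral>\<^sup>+ e. f (vec_shift n m e) \<partial>gauss_vec n \<sigma>)
           = (\<integral>\<^sup>+ z. ennreal (vec_lr n \<sigma> m z) * f z \<partial>gauss_vec n \<sigma>)"
proof -
  have "(\<integral>\<^sup>+ e. f (vec_shift n m e) \<partial>gauss_vec n \<sigma>)
      = (\<integral>\<^sup>+ z. f z \<partial>distr (gauss_vec n \<sigma>) (gauss_vec n \<sigma>) (vec_shift n m))"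
    using f by (intro nn_integral_distr[symmetric] measurable_vec_shift) simp
  also have "\<dots> = (\<integral>\<^sup>+ z. f z \<partial>density (gauss_vec n \<sigma>) (vec_lr n \<sigma> m))"
    by (simp add: distr_vec_shift density_vec_lr assms(1))
  finally show ?thesis
    using f by (simp add: nn_integral_density)
qed

lemma ln_vec_lr_vec_shift:
  "ln (vec_lr n \<sigma> m (vec_shift n m e)) = (\<Sum>i<n. (m i)\<^sup>2 / (2 * \<sigma>\<^sup>2) + m i / \<sigma>\<^sup>2 * e i)"
proof -
  have "(2 * (a + b) * a - a\<^sup>2) / (2 * \<sigma>\<^sup>2) = a\<^sup>2 / (2 * \<sigma>\<^sup>2) + a / \<sigma>\<^sup>2 * b" for a b :: real
  proof -
    have "2 * (a + b) * a - a\<^sup>2 = a\<^sup>2 + 2 * (a * b)"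
      by (simp add: power2_eq_square algebra_simps)
    then show ?thesis
      by (simp add: add_divide_distrib)
  qed
  then have "vec_lr n \<sigma> m (vec_shift n m e) = (\<Prod>i<n. exp ((m i)\<^sup>2 / (2 * \<sigma>\<^sup>2) + m i / \<sigma>\<^sup>2 * e i))"
    unfolding vec_lr_def gauss_lr_def vec_shift_def by (intro prod.cong refl) (simp add: mult.commute)
  then show ?thesis
    by (simp add: exp_sum[symmetric])
qed

lemma
  assumes "0 < \<sigma>" and "i < n"
  shows integrable_gauss_vec_component: "integrable (gauss_vec n \<sigma>) (\<lambda>e. e i)"
    and integral_gauss_vec_component: "(\<integral>e. e i \<partial>gauss_vec n \<sigma>) = 0"
proof -
  have component: "(\<lambda>e. e i) \<in> gauss_vec n \<sigma> \<rightarrow>\<^sub>M gauss \<sigma>"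
    unfolding gauss_vec_def using assms(2) by (intro measurable_PiM_component_rev) auto
  have distr: "distr (gauss_vec n \<sigma>) (gauss \<sigma>) (\<lambda>e. e i) = gauss \<sigma>"
    unfolding gauss_vec_def using assms by (intro distr_PiM_component prob_space_gauss) auto
  show "integrable (gauss_vec n \<sigma>) (\<lambda>e. e i)"
    using integrable_distr_eq[OF component, of "\<lambda>x. x"] integrable_gauss_id[OF assms(1)]
    by (simp add: distr)
  show "(\<integral>e. e i \<partial>gauss_vec n \<sigma>) = 0"
    using integral_distr[OF component, of "\<lambda>x. x"] integral_gauss_id[OF assms(1)]
    by (simp add: distr measurable_cong_sets[OF sets_gauss refl])
qed

lemma
  assumes "0 < \<sigma>"
  shows integrable_ln_vec_lr_vec_shift:
      "integrable (gauss_vec n \<sigma>) (\<lambda>e. ln (vec_lr n \<sigma> m (vec_shift n m e)))"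
    and integral_ln_vec_lr_vec_shift:
      "(\<integral>e. ln (vec_lr n \<sigma> m (vec_shift n m e)) \<partial>gauss_vec n \<sigma>) = (\<Sum>i<n. (m i)\<^sup>2) / (2 * \<sigma>\<^sup>2)"
proof -
  interpret prob_space "gauss_vec n \<sigma>"
    using assms by (rule prob_space_gauss_vec)
  have summand: "integrable (gauss_vec n \<sigma>) (\<lambda>e. (m i)\<^sup>2 / (2 * \<sigma>\<^sup>2) + m i / \<sigma>\<^sup>2 * e i)"
    "(\<integral>e. (m i)\<^sup>2 / (2 * \<sigma>\<^sup>2) + m i / \<sigma>\<^sup>2 * e i \<partial>gauss_vec n \<sigma>) = (m i)\<^sup>2 / (2 * \<sigma>\<^sup>2)"
    if "i < n" for i
    using integrable_gauss_vec_component[OF assms that] integral_gauss_vec_component[OF assms that]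
    by (simp_all add: prob_space del: times_divide_eq_left)
  show "integrable (gauss_vec n \<sigma>) (\<lambda>e. ln (vec_lr n \<sigma> m (vec_shift n m e)))"
    unfolding ln_vec_lr_vec_shift using summand(1) by (intro Bochner_Integration.integrable_sum) auto
  show "(\<integral>e. ln (vec_lr n \<sigma> m (vec_shift n m e)) \<partial>gauss_vec n \<sigma>) = (\<Sum>i<n. (m i)\<^sup>2) / (2 * \<sigma>\<^sup>2)"
    unfolding ln_vec_lr_vec_shift using summand
    by (simp add: Bochner_Integration.integral_sum sum_divide_distrib del: times_divide_eq_left)
qed

lemma
  assumes "0 < \<sigma>" and c: "c \<in> borel_measurable (gauss_vec n \<sigma>)" "\<And>z. 0 \<le> c z"
    "integrable (gauss_vec n \<sigma>) c"
  shows integrable_vec_shift_div_vec_lr: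
      "integrable (gauss_vec n \<sigma>) (\<lambda>e. c (vec_shift n m e) / vec_lr n \<sigma> m (vec_shift n m e))"
    and integral_vec_shift_div_vec_lr:
      "(\<integral>e. c (vec_shift n m e) / vec_lr n \<sigma> m (vec_shift n m e) \<partial>gauss_vec n \<sigma>) = (\<integral>z. c z \<partial>gauss_vec n \<sigma>)"
proof -
  let ?f = "\<lambda>e. c (vec_shift n m e) / vec_lr n \<sigma> m (vec_shift n m e)"
  have f_nonneg: "0 \<le> ?f e" for e
    using c(2) vec_lr_pos[of n \<sigma> m] by (simp add: less_imp_le)
  have "(\<integral>\<^sup>+ e. ennreal (?f e) \<partial>gauss_vec n \<sigma>)
      = (\<integral>\<^sup>+ z. ennreal (vec_lr n \<sigma> m z) * ennreal (c z / vec_lr n \<sigma> m z) \<partial>gauss_vec n \<sigma>)"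
    using c(1) by (intro nn_integral_vec_shift assms(1)) simp
  also have "\<dots> = (\<integral>\<^sup>+ z. ennreal (c z) \<partial>gauss_vec n \<sigma>)"
    using vec_lr_pos[of n \<sigma> m]
    by (intro nn_integral_cong) (simp add: ennreal_mult'[symmetric] less_imp_le less_imp_neq[symmetric])
  also have "\<dots> = ennreal (\<integral>z. c z \<partial>gauss_vec n \<sigma>)"
    using c by (intro nn_integral_eq_integral) auto
  finally have nn: "(\<integral>\<^sup>+ e. ennreal (?f e) \<partial>gauss_vec n \<sigma>) = ennreal (\<integral>z. c z \<partial>gauss_vec n \<sigma>)" .
  have "?f \<in> borel_measurable (gauss_vec n \<sigma>)"
    using measurable_compose[OF measurable_vec_shift c(1)]
      measurable_compose[OF measurable_vec_shift borel_measurable_vec_lr]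
    by measurable
  then show integrable: "integrable (gauss_vec n \<sigma>) ?f"
    using nn f_nonneg by (intro integrableI_nonneg) auto
  have "ennreal (\<integral>e. ?f e \<partial>gauss_vec n \<sigma>) = ennreal (\<integral>z. c z \<partial>gauss_vec n \<sigma>)"
    using nn integrable f_nonneg by (subst nn_integral_eq_integral[symmetric]) auto
  then show "(\<integral>e. ?f e \<partial>gauss_vec n \<sigma>) = (\<integral>z. c z \<partial>gauss_vec n \<sigma>)"
    using f_nonneg c(2) by (simp add: integral_nonneg_AE)
qed

section \<open>A Fano-type bound for Gaussian shifts\<close>

text \<open>Take \<open>c = 1/2 + (M - 1)/2 \<cdot> 1\<^sub>B\<close> and let \<open>L\<close> be the likelihood ratio of the shifted law.
  Integrating \<open>ln (c / L) \<le> c / L - 1\<close> against the shifted law gives \<open>E' ln c - KL \<le> E c - 1\<close>,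
  with \<open>KL = |m|\<^sup>2 / (2\<sigma>\<^sup>2)\<close>.\<close>

lemma ln_mult_measure_vec_shift_vimage_le:
  fixes M :: real
  assumes "0 < \<sigma>" "1 \<le> M" and B: "B \<in> sets (gauss_vec n \<sigma>)"
  shows "ln M * measure (gauss_vec n \<sigma>) (vec_shift n m -` B \<inter> space (gauss_vec n \<sigma>))
           \<le> ln 2 - 1/2 + (M - 1) / 2 * measure (gauss_vec n \<sigma>) B + (\<Sum>i<n. (m i)\<^sup>2) / (2 * \<sigma>\<^sup>2)"
proof -
  let ?E = "gauss_vec n \<sigma>"
  let ?L = "\<lambda>e. vec_lr n \<sigma> m (vec_shift n m e)"
  interpret E: prob_space ?E
    using assms(1) by (rule prob_space_gauss_vec)
  define A where "A = vec_shift n m -` B \<inter> space ?E"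
  define c where "c z = 1/2 + (M - 1) / 2 * indicator B z" for z
  have A: "A \<in> sets ?E"
    unfolding A_def using B by (rule measurable_sets[OF measurable_vec_shift])
  have c_pos: "0 < c z" for z
    using assms(2) by (simp add: c_def add_pos_nonneg)
  have finite: "emeasure ?E X < top" for X
    using E.emeasure_finite[of X] top.not_eq_extremum by blast
  have c_int: "integrable ?E c" "(\<integral>z. c z \<partial>?E) = 1/2 + (M - 1) / 2 * measure ?E B"
    unfolding c_def using B
    by (auto intro!: integrable_real_indicator simp: finite E.prob_space)
  have ln_c: "ln (c (vec_shift n m e)) = - ln 2 + ln M * indicator A e" if "e \<in> space ?E" for e
    using that assms(2) by (simp add: c_def A_def indicator_def ln_div add_divide_distrib[symmetric])
  have c_measurable: "c \<in> borel_measurable ?E"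
    unfolding c_def using B by measurable
  have ln_ratio: "ln (c (vec_shift n m e)) - ln (?L e) \<le> c (vec_shift n m e) / ?L e - 1" for e
    using ln_le_minus_one[of "c (vec_shift n m e) / ?L e"] c_pos[of "vec_shift n m e"] vec_lr_pos[of n \<sigma> m]
    by (simp add: ln_div less_imp_neq[symmetric])
  have pointwise: "- ln 2 + ln M * indicator A e \<le> c (vec_shift n m e) / ?L e - 1 + ln (?L e)"
    if "e \<in> space ?E" for e
    using ln_c[OF that] ln_ratio[of e] by linarith
  have "integrable ?E (\<lambda>e. c (vec_shift n m e) / ?L e - 1 + ln (?L e))"
    using c_measurable c_pos c_int(1) assms(1)
    by (intro Bochner_Integration.integrable_add Bochner_Integration.integrable_diff E.integrable_const
        integrable_vec_shift_div_vec_lr integrable_ln_vec_lr_vec_shift) (auto intro: less_imp_le)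
  then have "(\<integral>e. - ln 2 + ln M * indicator A e \<partial>?E) \<le> (\<integral>e. c (vec_shift n m e) / ?L e - 1 + ln (?L e) \<partial>?E)"
    using A pointwise by (intro integral_mono) (auto intro!: integrable_real_indicator simp: finite)
  then show ?thesis
    using A c_pos c_int c_measurable assms(1)
    by (simp add: integrable_vec_shift_div_vec_lr integral_vec_shift_div_vec_lr less_imp_le finite
        integrable_ln_vec_lr_vec_shift integral_ln_vec_lr_vec_shift E.prob_space A_def)
qed

lemma sum_measure_decoder_correct_le:
  fixes G :: "'g set" and m :: "'g \<Rightarrow> nat \<Rightarrow> real" and \<delta> :: "(nat \<Rightarrow> real) \<Rightarrow> 'g"
  assumes "0 < \<sigma>" "finite G" "G \<noteq> {}" and \<delta>: "\<delta> \<in> gauss_vec n \<sigma> \<rightarrow>\<^sub>M count_space G"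
  shows "ln (card G) * (\<Sum>g\<in>G. measure (gauss_vec n \<sigma>)
             (vec_shift n (m g) -` {z \<in> space (gauss_vec n \<sigma>). \<delta> z = g} \<inter> space (gauss_vec n \<sigma>)))
         \<le> card G * ln 2 + (\<Sum>g\<in>G. (\<Sum>i<n. (m g i)\<^sup>2) / (2 * \<sigma>\<^sup>2))"
proof -
  let ?E = "gauss_vec n \<sigma>"
  interpret E: prob_space ?E
    using assms(1) by (rule prob_space_gauss_vec)
  define B where "B g = {z \<in> space ?E. \<delta> z = g}" for g
  have B: "B g \<in> sets ?E" if "g \<in> G" for g
    using measurable_sets[OF \<delta>, of "{g}"] that by (simp add: B_def vimage_def Int_def conj_commute)
  have "(\<Sum>g\<in>G. measure ?E (B g)) = measure ?E (\<Union>g\<in>G. B g)"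
    using assms(2) B by (intro E.finite_measure_finite_Union[symmetric]) (auto simp: disjoint_family_on_def B_def)
  also have "(\<Union>g\<in>G. B g) = space ?E"
    using measurable_space[OF \<delta>] by (auto simp: B_def)
  finally have partition: "(\<Sum>g\<in>G. measure ?E (B g)) = 1"
    by (simp add: E.prob_space)
  have "1 \<le> real (card G)"
    using assms(2,3) by (simp add: Suc_le_eq card_gt_0_iff)
  then have "(\<Sum>g\<in>G. ln (card G) * measure ?E (vec_shift n (m g) -` B g \<inter> space ?E))
      \<le> (\<Sum>g\<in>G. ln 2 - 1/2 + (real (card G) - 1) / 2 * measure ?E (B g) + (\<Sum>i<n. (m g i)\<^sup>2) / (2 * \<sigma>\<^sup>2))"
    using assms(1) B by (intro sum_mono ln_mult_measure_vec_shift_vimage_le) auto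
  also have "\<dots> = card G * (ln 2 - 1/2) + (real (card G) - 1) / 2 * (\<Sum>g\<in>G. measure ?E (B g))
      + (\<Sum>g\<in>G. (\<Sum>i<n. (m g i)\<^sup>2) / (2 * \<sigma>\<^sup>2))"
    by (simp add: sum.distrib sum_distrib_left del: times_divide_eq_left)
  also have "\<dots> = card G * ln 2 - 1/2 + (\<Sum>g\<in>G. (\<Sum>i<n. (m g i)\<^sup>2) / (2 * \<sigma>\<^sup>2))"
    by (simp add: partition field_simps)
  finally show ?thesis
    by (simp add: B_def sum_distrib_left)
qed

section \<open>The class of products of cosines\<close>

lemma phi_squared: "(phi i z)\<^sup>2 = 1 + cos (2 * real i * pi * z)"
  using cos_double_cos[of "real i * pi * z"]
  unfolding phi_def by (simp add: power_mult_distrib mult.assoc)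

lemma has_integral_one_plus_cos:
  assumes "1 \<le> i"
  shows "((\<lambda>z. 1 + cos (2 * real i * pi * z)) has_integral 2) {-1..1::real}"
proof -
  define F where "F z = z + sin (2 * real i * pi * z) / (2 * real i * pi)" for z
  have "(F has_vector_derivative (1 + cos (2 * real i * pi * z))) (at z within {-1..1})" for z
    unfolding F_def has_real_derivative_iff_has_vector_derivative[symmetric] using assms
    by (auto intro!: derivative_eq_intros)
  then have "((\<lambda>z. 1 + cos (2 * real i * pi * z)) has_integral (F 1 - F (-1))) {-1..1::real}"
    by (intro fundamental_theorem_of_calculus) auto
  moreover have "sin (2 * real i * pi) = 0"
    using sin_npi[of "2 * i"] by (simp add: mult_ac)
  ultimately show ?thesis
    by (simp add: F_def)
qed

lemma prob_space_uniform_interval: "prob_space (uniform_measure lborel {-1..1::real})"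
  by (intro prob_space_uniform_measure) auto

lemma nn_integral_phi_squared_uniform:
  assumes "1 \<le> i"
  shows "(\<integral>\<^sup>+ z. ennreal ((phi i z)\<^sup>2) \<partial>uniform_measure lborel {-1..1::real}) = 1"
proof -
  have "(\<integral>\<^sup>+ z. ennreal ((phi i z)\<^sup>2) \<partial>uniform_measure lborel {-1..1::real})
      = (\<integral>\<^sup>+ z. ennreal ((phi i z)\<^sup>2) * indicator {-1..1} z \<partial>lborel) / emeasure lborel {-1..1::real}"
    by (rule nn_integral_uniform_measure) (auto simp: phi_def)
  also have "(\<integral>\<^sup>+ z. ennreal ((phi i z)\<^sup>2) * indicator {-1..1} z \<partial>lborel)
      = (\<integral>\<^sup>+ z. ennreal (indicator {-1..1} z * (1 + cos (2 * real i * pi * z))) \<partial>lborel)"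
    by (intro nn_integral_cong) (auto simp: phi_squared indicator_def)
  also have "\<dots> = ennreal 2"
  proof (rule nn_integral_has_integral_lebesgue)
    show "0 \<le> 1 + cos (2 * real i * pi * x)" for x
      using cos_ge_minus_one[of "2 * real i * pi * x"] by linarith
  qed (rule has_integral_one_plus_cos[OF assms])
  finally show ?thesis
    by (simp add: divide_ennreal)
qed

lemma admissible_finite: "admissible p q k A \<Longrightarrow> finite A"
  unfolding admissible_def by (auto intro: finite_subset)

lemma gA_squared_eq_prod:
  assumes "admissible p q k A"
  shows "(gA A y)\<^sup>2 = (\<Prod>j\<in>{1..p}. (if j \<in> snd ` A then (phi (fst (inv_into A snd j)) (y j))\<^sup>2 else 1))"
proof -
  have "inj_on snd A" "snd ` A \<subseteq> {1..p}"
    using assms unfolding admissible_def inj_on_def by auto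
  have "(gA A y)\<^sup>2 = (\<Prod>a\<in>A. (phi (fst a) (y (snd a)))\<^sup>2)"
    unfolding gA_def by (simp add: prod_power_distrib case_prod_beta)
  also have "\<dots> = (\<Prod>j\<in>snd ` A. (phi (fst (inv_into A snd j)) (y j))\<^sup>2)"
    using \<open>inj_on snd A\<close> by (subst prod.reindex) (auto simp: inv_into_f_f intro!: prod.cong)
  also have "\<dots> = (\<Prod>j\<in>{1..p}. (if j \<in> snd ` A then (phi (fst (inv_into A snd j)) (y j))\<^sup>2 else 1))"
    using \<open>snd ` A \<subseteq> {1..p}\<close> by (subst prod.If_cases) (auto intro!: prod.cong simp: Int_absorb1)
  finally show ?thesis .
qed

text \<open>The factors of \<open>gA A\<close> act on distinct coordinates, so \<open>E (gA A)\<^sup>2\<close> factorises into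
  the integrals \<open>E (phi i)\<^sup>2 = 1\<close>.\<close>

lemma nn_integral_gA_squared:
  assumes A: "admissible p q k A"
  shows "(\<integral>\<^sup>+ y. ennreal ((gA A y)\<^sup>2) \<partial>unif_cube p) = 1"
proof -
  let ?U = "uniform_measure lborel {-1..1::real}"
  interpret U: product_prob_space "\<lambda>_. ?U"
    by (rule product_prob_spaceI, rule prob_space_uniform_interval)
  define H where "H j z = (if j \<in> snd ` A then (phi (fst (inv_into A snd j)) z)\<^sup>2 else 1)" for j z
  have H_nonneg: "0 \<le> H j z" for j z
    by (simp add: H_def)
  have "(\<integral>\<^sup>+ y. ennreal ((gA A y)\<^sup>2) \<partial>unif_cube p) = (\<integral>\<^sup>+ y. (\<Prod>j\<in>{1..p}. ennreal (H j (y j))) \<partial>unif_cube p)"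
    by (intro nn_integral_cong) (simp add: gA_squared_eq_prod[OF A] H_def[symmetric] prod_ennreal H_nonneg)
  also have "\<dots> = (\<Prod>j\<in>{1..p}. \<integral>\<^sup>+ z. ennreal (H j z) \<partial>?U)"
    unfolding unif_cube_def H_def phi_def by (intro U.product_nn_integral_prod) auto
  also have "\<dots> = (\<Prod>j\<in>{1..p}. 1)"
  proof (intro prod.cong refl)
    fix j
    show "(\<integral>\<^sup>+ z. ennreal (H j z) \<partial>?U) = 1"
    proof (cases "j \<in> snd ` A")
      case True
      then have "inv_into A snd j \<in> A"
        by (auto intro: inv_into_into)
      then have "1 \<le> fst (inv_into A snd j)"
        using A unfolding admissible_def by auto
      then show ?thesis
        using True by (simp add: H_def nn_integral_phi_squared_uniform)
    next
      case False
      then show ?thesis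
        using prob_space.emeasure_space_1[OF prob_space_uniform_interval] by (simp add: H_def)
    qed
  qed
  finally show ?thesis
    by simp
qed

definition axis_point :: "nat \<Rightarrow> real \<Rightarrow> nat \<Rightarrow> real" where
  "axis_point j s = (\<lambda>l. if l = j then s else 0)"

lemma phi_zero: "phi i 0 = sqrt 2"
  by (simp add: phi_def)

lemma gA_axis_point_in:
  assumes A: "admissible p q k A" and ij: "(i, j) \<in> A"
  shows "gA A (axis_point j s) = phi i s * sqrt 2 ^ (card A - 1)"
proof -
  have "finite A"
    using A by (rule admissible_finite)
  have "snd a \<noteq> j" if "a \<in> A - {(i, j)}" for a
    using A that ij unfolding admissible_def by (cases a) force
  then have "(\<Prod>a\<in>A - {(i, j)}. phi (fst a) (axis_point j s (snd a))) = (\<Prod>a\<in>A - {(i, j)}. sqrt 2)"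
    by (intro prod.cong refl) (simp add: axis_point_def phi_zero)
  moreover have "gA A (axis_point j s) = phi i s * (\<Prod>a\<in>A - {(i, j)}. phi (fst a) (axis_point j s (snd a)))"
    unfolding gA_def using \<open>finite A\<close> ij
    by (subst prod.remove[of _ "(i, j)"]) (auto simp: case_prod_beta axis_point_def)
  ultimately show ?thesis
    using \<open>finite A\<close> ij by simp
qed

lemma gA_axis_point_out:
  assumes "j \<notin> snd ` A"
  shows "gA A (axis_point j s) = sqrt 2 ^ card A"
proof -
  have "gA A (axis_point j s) = (\<Prod>a\<in>A. sqrt 2)"
    unfolding gA_def using assms
    by (intro prod.cong refl) (auto simp: case_prod_beta axis_point_def phi_zero image_iff)
  then show ?thesis
    by simp
qed

lemma cos_pi_div_gt_minus_one:
  assumes "1 \<le> i" "i < i'"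
  shows "cos (real i * pi * (1 / real i')) > -1"
proof -
  have "cos pi < cos (real i * pi * (1 / real i'))"
    using assms by (intro cos_monotone_0_pi) (auto simp: field_simps)
  then show ?thesis
    by simp
qed

lemma phi_scaled_eq_imp_eq:
  assumes "1 \<le> i" "1 \<le> i'" "c \<noteq> 0" and eq: "\<And>s. phi i s * c = phi i' s * c'"
  shows "i = i'"
proof (rule ccontr)
  assume "i \<noteq> i'"
  from eq[of 0] have "c = c'"
    by (simp add: phi_zero)
  then have cos_eq: "cos (real i * pi * s) = cos (real i' * pi * s)" for s
    using eq[of s] assms(3) by (simp add: phi_def)
  show False
  proof (cases "i < i'")
    case True
    have "cos (real i' * pi * (1 / real i')) = -1"
      using assms(2) by simp
    then show False
      using cos_eq[of "1 / real i'"] cos_pi_div_gt_minus_one[OF assms(1) True] by simp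
  next
    case False
    then have "i' < i"
      using \<open>i \<noteq> i'\<close> by simp
    have "cos (real i * pi * (1 / real i)) = -1"
      using assms(1) by simp
    then show False
      using cos_eq[of "1 / real i"] cos_pi_div_gt_minus_one[OF assms(2) \<open>i' < i\<close>] by simp
  qed
qed

text \<open>On the \<open>j\<close>-th axis, \<open>gA A\<close> is \<open>phi i\<close> times a positive constant if \<open>(i, j) \<in> A\<close>, and
  a constant if no pair of \<open>A\<close> lies in column \<open>j\<close>.\<close>

lemma gA_neq:
  assumes A: "admissible p q k A" and B: "admissible p q k B" and ij: "(i, j) \<in> A" "(i, j) \<notin> B"
  shows "gA A \<noteq> gA B"
proof
  assume eq: "gA A = gA B"
  have "1 \<le> i"
    using A ij unfolding admissible_def by auto
  show False
  proof (cases "j \<in> snd ` B")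
    case False
    have "phi i (1 / real i) = - sqrt 2"
      using \<open>1 \<le> i\<close> by (simp add: phi_def)
    moreover have "gA A (axis_point j (1 / real i)) = gA B (axis_point j (1 / real i))"
      using eq by simp
    ultimately have "- sqrt 2 * sqrt 2 ^ (card A - 1) = sqrt 2 ^ card B"
      using gA_axis_point_in[OF A ij(1)] gA_axis_point_out[OF False] by simp
    moreover have "0 < sqrt 2 ^ card B" "0 < sqrt 2 * sqrt 2 ^ (card A - 1)"
      by simp_all
    ultimately show False
      by linarith
  next
    case True
    then obtain i' where i': "(i', j) \<in> B"
      by auto
    have "i' \<noteq> i" "1 \<le> i'"
      using i' ij B unfolding admissible_def by auto
    have "phi i s * sqrt 2 ^ (card A - 1) = phi i' s * sqrt 2 ^ (card B - 1)" for s
      using gA_axis_point_in[OF A ij(1), of s] gA_axis_point_in[OF B i', of s] eq by simp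
    then have "i = i'"
      by (rule phi_scaled_eq_imp_eq[OF \<open>1 \<le> i\<close> \<open>1 \<le> i'\<close>, rotated]) simp
    with \<open>i' \<noteq> i\<close> show False
      by simp
  qed
qed

lemma inj_on_gA: "inj_on gA {A. admissible p q k A}"
proof (rule inj_onI, rule ccontr)
  fix A B assume A: "A \<in> {A. admissible p q k A}" and B: "B \<in> {A. admissible p q k A}"
    and "gA A = gA B" "A \<noteq> B"
  then obtain a where "a \<in> A \<and> a \<notin> B \<or> a \<in> B \<and> a \<notin> A"
    by blast
  then show False
    using gA_neq[of p q k A B "fst a" "snd a"] gA_neq[of p q k B A "fst a" "snd a"] A B \<open>gA A = gA B\<close>
    by auto
qed

lemma finite_admissible: "finite {A. admissible p q k A}"
  by (rule finite_subset[of _ "Pow ({1..q} \<times> {1..p})"]) (auto simp: admissible_def)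

lemma finite_Gcls: "finite (Gcls p q k)"
  unfolding Gcls_def by (intro finite_imageI finite_admissible)

lemma Gcls_nonempty: "Gcls p q k \<noteq> {}"
proof -
  have "admissible p q k {}"
    unfolding admissible_def by auto
  then show ?thesis
    unfolding Gcls_def by auto
qed

lemma admissible_graph:
  assumes "J \<subseteq> {1..p}" "card J = k + 1" "f \<in> J \<rightarrow>\<^sub>E {1..q}"
  shows "admissible p q k ((\<lambda>j. (f j, j)) ` J)"
proof -
  have "finite J"
    using assms(1) by (rule finite_subset) simp
  then have "card ((\<lambda>j. (f j, j)) ` J) \<le> k + 1"
    using card_image_le[of J "\<lambda>j. (f j, j)"] assms(2) by simp
  moreover have "(\<lambda>j. (f j, j)) ` J \<subseteq> {1..q} \<times> {1..p}"
    using assms(1) PiE_mem[OF assms(3)] by blast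
  ultimately show ?thesis
    unfolding admissible_def by auto
qed

lemma inj_on_graph:
  "inj_on (\<lambda>(J, f). (\<lambda>j. (f j, j)) ` J) (SIGMA J:\<J>. J \<rightarrow>\<^sub>E B)"
proof (rule inj_onI)
  fix x y assume "x \<in> (SIGMA J:\<J>. J \<rightarrow>\<^sub>E B)" "y \<in> (SIGMA J:\<J>. J \<rightarrow>\<^sub>E B)"
    and graph: "(\<lambda>(J, f). (\<lambda>j. (f j, j)) ` J) x = (\<lambda>(J, f). (\<lambda>j. (f j, j)) ` J) y"
  then obtain J f J' f' where x: "x = (J, f)" "f \<in> J \<rightarrow>\<^sub>E B" and y: "y = (J', f')" "f' \<in> J' \<rightarrow>\<^sub>E B"
    by auto
  have graph: "(\<lambda>j. (f j, j)) ` J = (\<lambda>j. (f' j, j)) ` J'"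
    using graph unfolding x y by simp
  then have "snd ` (\<lambda>j. (f j, j)) ` J = snd ` (\<lambda>j. (f' j, j)) ` J'"
    by simp
  then have "J = J'"
    by (simp add: image_image)
  moreover have "f j = f' j" if "j \<in> J" for j
  proof -
    have "(f j, j) \<in> (\<lambda>j. (f' j, j)) ` J'"
      using graph that by blast
    then show ?thesis
      by auto
  qed
  ultimately show "x = y"
    using x y by (auto intro: PiE_ext)
qed

lemma card_subsets_labellings:
  "card (SIGMA J:{J. J \<subseteq> {1..p} \<and> card J = k + 1}. J \<rightarrow>\<^sub>E {1..q}) = (p choose (k + 1)) * q ^ (k + 1)"
proof -
  define \<J> where "\<J> = {J. J \<subseteq> {1..p} \<and> card J = k + 1}"
  have finite_\<J>: "finite \<J>"
    unfolding \<J>_def by (rule finite_subset[of _ "Pow {1..p}"]) auto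
  have finite_J: "finite J" if "J \<in> \<J>" for J
    using that unfolding \<J>_def by (auto intro: finite_subset)
  have "card (SIGMA J:\<J>. J \<rightarrow>\<^sub>E {1..q}) = (\<Sum>J\<in>\<J>. card (J \<rightarrow>\<^sub>E {1..q}))"
    using finite_\<J> finite_J by (subst card_SigmaI) (auto intro!: finite_PiE)
  also have "\<dots> = (\<Sum>J\<in>\<J>. q ^ (k + 1))"
    using finite_J by (intro sum.cong refl) (simp add: card_PiE \<J>_def)
  also have "\<dots> = card \<J> * q ^ (k + 1)"
    by simp
  also have "card \<J> = p choose (k + 1)"
    unfolding \<J>_def using n_subsets[of "{1..p}" "k + 1"] by simp
  finally show ?thesis
    unfolding \<J>_def .
qed

lemma card_Gcls_ge: "q ^ (k + 1) * (p choose (k + 1)) \<le> card (Gcls p q k)"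
proof -
  define D where "D = (SIGMA J:{J. J \<subseteq> {1..p} \<and> card J = k + 1}. J \<rightarrow>\<^sub>E {1..q})"
  have "(\<lambda>(J, f). (\<lambda>j. (f j, j)) ` J) ` D \<subseteq> {A. admissible p q k A}"
  proof
    fix A assume "A \<in> (\<lambda>(J, f). (\<lambda>j. (f j, j)) ` J) ` D"
    then obtain J f where "J \<subseteq> {1..p}" "card J = k + 1" "f \<in> J \<rightarrow>\<^sub>E {1..q}" "A = (\<lambda>j. (f j, j)) ` J"
      unfolding D_def by blast
    then show "A \<in> {A. admissible p q k A}"
      using admissible_graph by blast
  qed
  then have "card D \<le> card {A. admissible p q k A}"
    unfolding D_def by (intro card_inj_on_le[OF inj_on_graph] finite_admissible)
  also have "\<dots> = card (Gcls p q k)"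
    unfolding Gcls_def by (intro card_image[symmetric] inj_on_gA)
  finally show ?thesis
    unfolding D_def card_subsets_labellings by (simp add: mult.commute)
qed

lemma sets_unif_cube [measurable_cong]: "sets (unif_cube p) = sets (PiM {1..p} (\<lambda>_. borel :: real measure))"
  unfolding unif_cube_def by (intro sets_PiM_cong) auto

lemma space_unif_cube: "space (unif_cube p) = {1..p} \<rightarrow>\<^sub>E UNIV"
  unfolding unif_cube_def by (simp add: space_PiM)

lemma prob_space_unif_cube: "prob_space (unif_cube p)"
  unfolding unif_cube_def by (intro prob_space_PiM prob_space_uniform_interval)

lemma borel_measurable_phi [measurable]: "phi i \<in> borel_measurable borel"
  unfolding phi_def by measurable

lemma borel_measurable_Gcls:
  assumes "g \<in> Gcls p q k"
  shows "g \<in> borel_measurable (PiM {1..p} (\<lambda>_. borel :: real measure))"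
proof -
  obtain A where A: "admissible p q k A" and g: "g = gA A"
    using assms unfolding Gcls_def by auto
  have "(\<lambda>x. phi i (x j)) \<in> borel_measurable (PiM {1..p} (\<lambda>_. borel :: real measure))" if "(i, j) \<in> A" for i j
  proof -
    have "j \<in> {1..p}"
      using A that unfolding admissible_def by auto
    then show ?thesis
      by measurable
  qed
  then show ?thesis
    unfolding g gA_def case_prod_beta by (intro borel_measurable_prod) auto
qed

lemma borel_measurable_Gcls_unif_cube: "g \<in> Gcls p q k \<Longrightarrow> g \<in> borel_measurable (unif_cube p)"
  using borel_measurable_Gcls[of g p q k] by (simp add: measurable_cong_sets[OF sets_unif_cube refl])

section \<open>The regression experiment\<close>

lemma nn_integral_pair_pair_measure:
  assumes "sigma_finite_measure M2" "sigma_finite_measure M3"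
    and f: "f \<in> borel_measurable (M1 \<Otimes>\<^sub>M (M2 \<Otimes>\<^sub>M M3))"
  shows "(\<integral>\<^sup>+ w. f w \<partial>(M1 \<Otimes>\<^sub>M (M2 \<Otimes>\<^sub>M M3))) = (\<integral>\<^sup>+ x. \<integral>\<^sup>+ z. \<integral>\<^sup>+ y. f (x, y, z) \<partial>M2 \<partial>M3 \<partial>M1)"
proof -
  interpret M23: pair_sigma_finite M2 M3
    using assms(1,2) by (rule pair_sigma_finite.intro)
  have "(\<integral>\<^sup>+ w. f w \<partial>(M1 \<Otimes>\<^sub>M (M2 \<Otimes>\<^sub>M M3))) = (\<integral>\<^sup>+ x. \<integral>\<^sup>+ v. f (x, v) \<partial>(M2 \<Otimes>\<^sub>M M3) \<partial>M1)"
    using f by (rule M23.P.nn_integral_fst[symmetric])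
  also have "\<dots> = (\<integral>\<^sup>+ x. \<integral>\<^sup>+ z. \<integral>\<^sup>+ y. f (x, y, z) \<partial>M2 \<partial>M3 \<partial>M1)"
    using f by (intro nn_integral_cong M23.nn_integral_snd[symmetric]) (simp add: measurable_Pair2)
  finally show ?thesis .
qed

locale regression_experiment =
  fixes p q k n :: nat and \<sigma> :: real and t :: "real \<Rightarrow> real" and R :: "'r measure"
    and est :: "(nat \<Rightarrow> (nat \<Rightarrow> real) \<times> real) \<Rightarrow> 'r \<Rightarrow> ((nat \<Rightarrow> real) \<Rightarrow> real)"
  assumes sigma_pos: "0 < \<sigma>"
    and borel_measurable_t [measurable]: "t \<in> borel_measurable borel"
    and prob_space_R: "prob_space R"
    and measurable_est: "(\<lambda>(s, r). est s r) \<in> data_space p n \<Otimes>\<^sub>M R \<rightarrow>\<^sub>M count_space (Gcls p q k)"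
begin

abbreviation covariates :: "(nat \<Rightarrow> nat \<Rightarrow> real) measure" where
  "covariates \<equiv> PiM {..<n} (\<lambda>_. unif_cube p)"

abbreviation noise :: "(nat \<Rightarrow> real) measure" where
  "noise \<equiv> gauss_vec n \<sigma>"

abbreviation trial :: "((nat \<Rightarrow> nat \<Rightarrow> real) \<times> (nat \<Rightarrow> real) \<times> 'r) measure" where
  "trial \<equiv> covariates \<Otimes>\<^sub>M (noise \<Otimes>\<^sub>M R)"

definition data :: "(nat \<Rightarrow> nat \<Rightarrow> real) \<Rightarrow> (nat \<Rightarrow> real) \<Rightarrow> nat \<Rightarrow> (nat \<Rightarrow> real) \<times> real" where
  "data xs z = (\<lambda>i\<in>{..<n}. (xs i, t (z i)))"

definition correct :: "((nat \<Rightarrow> real) \<Rightarrow> real) \<Rightarrow> ((nat \<Rightarrow> nat \<Rightarrow> real) \<times> (nat \<Rightarrow> real) \<times> 'r) set" where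
  "correct g = {(xs, es, r) \<in> space trial. est (observed n t g xs es) r = g}"

lemma observed_eq_data: "observed n t g xs es = data xs (vec_shift n (\<lambda>i. g (xs i)) es)"
  unfolding observed_def data_def vec_shift_def by (intro restrict_ext) simp

lemma prob_space_covariates: "prob_space covariates"
  by (intro prob_space_PiM prob_space_unif_cube)

lemma prob_space_noise: "prob_space noise"
  using sigma_pos by (rule prob_space_gauss_vec)

lemma measurable_est_data:
  assumes "xs \<in> space covariates" "r \<in> space R"
  shows "(\<lambda>z. est (data xs z) r) \<in> noise \<rightarrow>\<^sub>M count_space (Gcls p q k)"
proof -
  have "xs i \<in> space (PiM {1..p} (\<lambda>_. borel :: real measure))" if "i < n" for i
    using assms(1) that by (auto simp: space_PiM space_unif_cube)
  then have "data xs \<in> noise \<rightarrow>\<^sub>M data_space p n"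
    unfolding data_def data_space_def gauss_vec_def
    by (intro measurable_restrict measurable_Pair measurable_const) measurable
  then show ?thesis
    using measurable_compose[OF _ measurable_est, of "\<lambda>z. (data xs z, r)"] assms(2) by simp
qed

lemma measurable_est_observed:
  assumes "g \<in> Gcls p q k"
  shows "(\<lambda>(xs, es, r). est (observed n t g xs es) r) \<in> trial \<rightarrow>\<^sub>M count_space (Gcls p q k)"
proof -
  note [measurable] = borel_measurable_Gcls[OF assms]
  have "(\<lambda>(xs, es). observed n t g xs es) \<in> covariates \<Otimes>\<^sub>M noise \<rightarrow>\<^sub>M data_space p n"
    unfolding observed_def data_space_def gauss_vec_def case_prod_beta
    by (intro measurable_restrict) measurable
  then have "(\<lambda>w. (observed n t g (fst w) (fst (snd w)), snd (snd w))) \<in> trial \<rightarrow>\<^sub>M data_space p n \<Otimes>\<^sub>M R"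
    by measurable
  from measurable_compose[OF this measurable_est] show ?thesis
    by (simp add: case_prod_beta)
qed

lemma sets_correct:
  assumes "g \<in> Gcls p q k"
  shows "correct g \<in> sets trial"
proof -
  have "correct g = (\<lambda>(xs, es, r). est (observed n t g xs es) r) -` {g} \<inter> space trial"
    by (auto simp: correct_def)
  then show ?thesis
    using measurable_sets[OF measurable_est_observed[OF assms], of "{g}"] assms by simp
qed

lemma prob_space_trial: "prob_space trial"
  using prob_space_covariates prob_space_noise prob_space_R
  by (intro prob_space_pair pair_prob_space.intro pair_sigma_finite.intro prob_space_imp_sigma_finite)

lemma sample_space_eq: "sample_space p q k n \<sigma> R = uniform_count_measure (Gcls p q k) \<Otimes>\<^sub>M trial"
  by (simp add: sample_space_def gauss_vec_def)

lemma sets_sample_space_correct: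
  "{(g, xs, es, r) \<in> space (sample_space p q k n \<sigma> R). est (observed n t g xs es) r = g}
     \<in> sets (sample_space p q k n \<sigma> R)"
proof -
  let ?G = "Gcls p q k"
  let ?P = "\<lambda>(g, xs, es, r). est (observed n t g xs es) r = g"
  have "?P \<in> count_space ?G \<Otimes>\<^sub>M trial \<rightarrow>\<^sub>M count_space UNIV"
  proof (rule measurable_pair_measure_countable1)
    fix g assume "g \<in> ?G"
    have "(\<lambda>h. h = g) \<in> count_space ?G \<rightarrow>\<^sub>M count_space UNIV"
      by simp
    from measurable_compose[OF measurable_est_observed[OF \<open>g \<in> ?G\<close>] this]
    show "(\<lambda>w. ?P (g, w)) \<in> trial \<rightarrow>\<^sub>M count_space UNIV"
      by (simp add: case_prod_beta)
  qed (simp add: countable_finite finite_Gcls)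
  then have "{\<omega> \<in> space (count_space ?G \<Otimes>\<^sub>M trial). ?P \<omega>} \<in> sets (count_space ?G \<Otimes>\<^sub>M trial)"
    by (intro predE) (simp add: pred_def)
  moreover have "sets (sample_space p q k n \<sigma> R) = sets (count_space ?G \<Otimes>\<^sub>M trial)"
    unfolding sample_space_eq by (intro sets_pair_measure_cong) (simp_all add: sets_uniform_count_measure)
  moreover have "{(g, xs, es, r) \<in> space (sample_space p q k n \<sigma> R). ?P (g, xs, es, r)}
      = {\<omega> \<in> space (count_space ?G \<Otimes>\<^sub>M trial). ?P \<omega>}"
    by (auto simp: sample_space_eq space_pair_measure space_uniform_count_measure)
  ultimately show ?thesis
    by simp
qed

lemma measure_sample_space_error:
  "measure (sample_space p q k n \<sigma> R)
       {(g, xs, es, r) \<in> space (sample_space p q k n \<sigma> R). est (observed n t g xs es) r \<noteq> g}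
     = 1 - (\<Sum>g\<in>Gcls p q k. measure trial (correct g)) / card (Gcls p q k)"
proof -
  let ?G = "Gcls p q k"
  let ?S = "sample_space p q k n \<sigma> R"
  define good where "good = {(g, xs, es, r) \<in> space ?S. est (observed n t g xs es) r = g}"
  interpret T: prob_space trial
    by (rule prob_space_trial)
  interpret UT: pair_prob_space "uniform_count_measure ?G" trial
    by (intro pair_prob_space.intro pair_sigma_finite.intro prob_space_imp_sigma_finite
        prob_space_uniform_count_measure finite_Gcls Gcls_nonempty prob_space_trial)
  have good: "good \<in> sets (uniform_count_measure ?G \<Otimes>\<^sub>M trial)"
    unfolding good_def sample_space_eq[symmetric] by (rule sets_sample_space_correct)
  have "emeasure ?S good = (\<integral>\<^sup>+ g. emeasure trial (Pair g -` good) \<partial>uniform_count_measure ?G)"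
    using good unfolding sample_space_eq by (rule T.emeasure_pair_measure_alt)
  also have "\<dots> = (\<Sum>g\<in>?G. ennreal (1 / card ?G) * emeasure trial (Pair g -` good))"
    unfolding uniform_count_measure_def using finite_Gcls by (rule nn_integral_point_measure_finite)
  also have "\<dots> = (\<Sum>g\<in>?G. ennreal (measure trial (correct g) / card ?G))"
  proof (intro sum.cong refl)
    fix g assume "g \<in> ?G"
    then have "Pair g -` good = correct g"
      by (auto simp: good_def correct_def sample_space_eq space_pair_measure space_uniform_count_measure)
    then show "ennreal (1 / card ?G) * emeasure trial (Pair g -` good)
        = ennreal (measure trial (correct g) / card ?G)"
      by (simp add: T.emeasure_eq_measure ennreal_mult'[symmetric])
  qed
  finally have "emeasure ?S good = ennreal ((\<Sum>g\<in>?G. measure trial (correct g)) / card ?G)"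
    by (simp add: sum_divide_distrib)
  then have "measure ?S good = (\<Sum>g\<in>?G. measure trial (correct g)) / card ?G"
    by (simp add: measure_def sum_nonneg)
  moreover have "{(g, xs, es, r) \<in> space ?S. est (observed n t g xs es) r \<noteq> g} = space ?S - good"
    by (auto simp: good_def)
  ultimately show ?thesis
    using UT.P.prob_compl[OF good] by (simp add: sample_space_eq)
qed

lemma correct_slice:
  assumes "xs \<in> space covariates" "r \<in> space R" "e \<in> space noise"
  shows "(xs, e, r) \<in> correct g \<longleftrightarrow> est (data xs (vec_shift n (\<lambda>i. g (xs i)) e)) r = g"
proof -
  have "(xs, e, r) \<in> space trial"
    using assms by (simp add: space_pair_measure)
  then show ?thesis
    by (simp add: correct_def observed_eq_data)
qed

lemma sum_emeasure_correct_slice_le: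
  assumes "1 < card (Gcls p q k)" "xs \<in> space covariates" "r \<in> space R"
  shows "(\<Sum>g\<in>Gcls p q k. emeasure noise {e \<in> space noise. (xs, e, r) \<in> correct g})
    \<le> ennreal ((card (Gcls p q k) * ln 2 + (\<Sum>g\<in>Gcls p q k. \<Sum>i<n. (g (xs i))\<^sup>2) / (2 * \<sigma>\<^sup>2))
                / ln (card (Gcls p q k)))"
proof -
  let ?G = "Gcls p q k"
  let ?decide = "\<lambda>z. est (data xs z) r"
  interpret N: prob_space noise
    by (rule prob_space_noise)
  have slice: "{e \<in> space noise. (xs, e, r) \<in> correct g}
      = vec_shift n (\<lambda>i. g (xs i)) -` {z \<in> space noise. ?decide z = g} \<inter> space noise" for g
    using assms(2,3) measurable_space[OF measurable_vec_shift] by (auto simp: correct_slice)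
  have "ln (card ?G) * (\<Sum>g\<in>?G. measure noise {e \<in> space noise. (xs, e, r) \<in> correct g})
      \<le> card ?G * ln 2 + (\<Sum>g\<in>?G. (\<Sum>i<n. (g (xs i))\<^sup>2) / (2 * \<sigma>\<^sup>2))"
    unfolding slice
    using sum_measure_decoder_correct_le[OF sigma_pos finite_Gcls Gcls_nonempty
        measurable_est_data[OF assms(2,3)], of "\<lambda>g i. g (xs i)"]
    by simp
  moreover have "0 < ln (card ?G)"
    using assms(1) by simp
  ultimately have "(\<Sum>g\<in>?G. measure noise {e \<in> space noise. (xs, e, r) \<in> correct g})
      \<le> (card ?G * ln 2 + (\<Sum>g\<in>?G. \<Sum>i<n. (g (xs i))\<^sup>2) / (2 * \<sigma>\<^sup>2)) / ln (card ?G)"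
    by (simp add: pos_le_divide_eq sum_divide_distrib[symmetric] mult.commute[of "ln _"])
  then show ?thesis
    using ennreal_leI by (simp add: N.emeasure_eq_measure)
qed

lemma nn_integral_Gcls_squared_covariate:
  assumes "g \<in> Gcls p q k" "i < n"
  shows "(\<integral>\<^sup>+ xs. ennreal ((g (xs i))\<^sup>2) \<partial>covariates) = 1"
proof -
  have component: "(\<lambda>xs. xs i) \<in> covariates \<rightarrow>\<^sub>M unif_cube p"
    using assms(2) by (intro measurable_PiM_component_rev) auto
  have "distr covariates (unif_cube p) (\<lambda>xs. xs i) = unif_cube p"
    using assms(2) by (intro distr_PiM_component prob_space_unif_cube) auto
  moreover have "(\<lambda>y. ennreal ((g y)\<^sup>2)) \<in> borel_measurable (unif_cube p)"
    using borel_measurable_Gcls_unif_cube[OF assms(1)] by measurable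
  ultimately have "(\<integral>\<^sup>+ xs. ennreal ((g (xs i))\<^sup>2) \<partial>covariates) = (\<integral>\<^sup>+ y. ennreal ((g y)\<^sup>2) \<partial>unif_cube p)"
    using nn_integral_distr[OF component, of "\<lambda>y. ennreal ((g y)\<^sup>2)"] by simp
  also obtain A where "admissible p q k A" "g = gA A"
    using assms(1) by (auto simp: Gcls_def)
  then have "(\<integral>\<^sup>+ y. ennreal ((g y)\<^sup>2) \<partial>unif_cube p) = 1"
    by (simp add: nn_integral_gA_squared)
  finally show ?thesis .
qed

lemma borel_measurable_Gcls_covariate:
  assumes "g \<in> Gcls p q k" "i < n"
  shows "(\<lambda>xs. g (xs i)) \<in> borel_measurable covariates"
proof -
  have "(\<lambda>xs. xs i) \<in> covariates \<rightarrow>\<^sub>M unif_cube p"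
    using assms(2) by (intro measurable_PiM_component_rev) auto
  then show ?thesis
    using borel_measurable_Gcls_unif_cube[OF assms(1)] by (rule measurable_compose)
qed

lemma nn_integral_sum_squares_covariates:
  "(\<integral>\<^sup>+ xs. ennreal (\<Sum>g\<in>Gcls p q k. \<Sum>i<n. (g (xs i))\<^sup>2) \<partial>covariates) = ennreal (card (Gcls p q k) * n)"
proof -
  let ?G = "Gcls p q k"
  have measurable: "(\<lambda>xs. ennreal ((g (xs i))\<^sup>2)) \<in> borel_measurable covariates" if "g \<in> ?G" "i < n" for g i
    using borel_measurable_Gcls_covariate[OF that] by measurable
  have "(\<integral>\<^sup>+ xs. ennreal (\<Sum>g\<in>?G. \<Sum>i<n. (g (xs i))\<^sup>2) \<partial>covariates)
      = (\<integral>\<^sup>+ xs. (\<Sum>g\<in>?G. \<Sum>i<n. ennreal ((g (xs i))\<^sup>2)) \<partial>covariates)"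
    by (intro nn_integral_cong) (simp add: sum_nonneg)
  also have "\<dots> = (\<Sum>g\<in>?G. \<integral>\<^sup>+ xs. (\<Sum>i<n. ennreal ((g (xs i))\<^sup>2)) \<partial>covariates)"
    by (intro nn_integral_sum borel_measurable_sum) (blast intro: measurable)
  also have "\<dots> = (\<Sum>g\<in>?G. \<Sum>i<n. \<integral>\<^sup>+ xs. ennreal ((g (xs i))\<^sup>2) \<partial>covariates)"
    by (intro sum.cong refl nn_integral_sum) (blast intro: measurable)
  also have "\<dots> = ennreal (card ?G * n)"
    by (simp add: nn_integral_Gcls_squared_covariate ennreal_of_nat_eq_real_of_nat ennreal_mult)
  finally show ?thesis .
qed

lemma sets_correct_slice:
  assumes "g \<in> Gcls p q k" "xs \<in> space covariates" "r \<in> space R"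
  shows "{e \<in> space noise. (xs, e, r) \<in> correct g} \<in> sets noise"
proof -
  have "(\<lambda>e. (xs, e, r)) \<in> noise \<rightarrow>\<^sub>M trial"
    using assms(2,3) by measurable
  from measurable_sets[OF this sets_correct[OF assms(1)]] show ?thesis
    by (simp add: vimage_def Int_def conj_commute)
qed

lemma sum_measure_correct_eq_iterated:
  "ennreal (\<Sum>g\<in>Gcls p q k. measure trial (correct g))
     = (\<integral>\<^sup>+ xs. \<integral>\<^sup>+ r. (\<Sum>g\<in>Gcls p q k. emeasure noise {e \<in> space noise. (xs, e, r) \<in> correct g})
          \<partial>R \<partial>covariates)"
proof -
  let ?G = "Gcls p q k"
  interpret N: prob_space noise
    by (rule prob_space_noise)
  interpret R: prob_space R
    by (rule prob_space_R)
  interpret T: prob_space trial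
    by (rule prob_space_trial)
  have "ennreal (\<Sum>g\<in>?G. measure trial (correct g)) = (\<Sum>g\<in>?G. \<integral>\<^sup>+ w. indicator (correct g) w \<partial>trial)"
    by (simp add: sets_correct T.emeasure_eq_measure)
  also have "\<dots> = (\<integral>\<^sup>+ w. (\<Sum>g\<in>?G. indicator (correct g) w) \<partial>trial)"
    by (intro nn_integral_sum[symmetric]) (auto intro: borel_measurable_indicator sets_correct)
  also have "\<dots> = (\<integral>\<^sup>+ xs. \<integral>\<^sup>+ r. \<integral>\<^sup>+ e. (\<Sum>g\<in>?G. indicator (correct g) (xs, e, r)) \<partial>noise \<partial>R \<partial>covariates)"
    by (intro nn_integral_pair_pair_measure N.sigma_finite_measure_axioms R.sigma_finite_measure_axioms
        borel_measurable_sum borel_measurable_indicator sets_correct)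
  also have "\<dots> = (\<integral>\<^sup>+ xs. \<integral>\<^sup>+ r. (\<Sum>g\<in>?G. emeasure noise {e \<in> space noise. (xs, e, r) \<in> correct g})
      \<partial>R \<partial>covariates)"
  proof (intro nn_integral_cong)
    fix xs r assume "xs \<in> space covariates" "r \<in> space R"
    then have embed: "(\<lambda>e. (xs, e, r)) \<in> noise \<rightarrow>\<^sub>M trial"
      by measurable
    have "(\<integral>\<^sup>+ e. (\<Sum>g\<in>?G. indicator (correct g) (xs, e, r)) \<partial>noise)
        = (\<Sum>g\<in>?G. \<integral>\<^sup>+ e. indicator (correct g) (xs, e, r) \<partial>noise)"
      by (intro nn_integral_sum)
        (auto intro!: measurable_compose[OF embed] borel_measurable_indicator sets_correct)
    also have "\<dots> = (\<Sum>g\<in>?G. \<integral>\<^sup>+ e. indicator {e \<in> space noise. (xs, e, r) \<in> correct g} e \<partial>noise)"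
      by (intro sum.cong refl nn_integral_cong) (simp add: indicator_def)
    finally show "(\<integral>\<^sup>+ e. (\<Sum>g\<in>?G. indicator (correct g) (xs, e, r)) \<partial>noise)
        = (\<Sum>g\<in>?G. emeasure noise {e \<in> space noise. (xs, e, r) \<in> correct g})"
      using sets_correct_slice \<open>xs \<in> space covariates\<close> \<open>r \<in> space R\<close> by simp
  qed
  finally show ?thesis .
qed

lemma sum_measure_correct_le:
  assumes "1 < card (Gcls p q k)"
  shows "(\<Sum>g\<in>Gcls p q k. measure trial (correct g))
           \<le> card (Gcls p q k) * (ln 2 + n / (2 * \<sigma>\<^sup>2)) / ln (card (Gcls p q k))"
proof -
  let ?G = "Gcls p q k"
  let ?L = "ln (card ?G)"
  let ?S = "\<lambda>xs. \<Sum>g\<in>?G. \<Sum>i<n. (g (xs i))\<^sup>2"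
  interpret C: prob_space covariates
    by (rule prob_space_covariates)
  interpret R: prob_space R
    by (rule prob_space_R)
  have L: "0 < ?L"
    using assms by simp
  define a where "a = card ?G * ln 2 / ?L"
  define b where "b = 1 / (2 * \<sigma>\<^sup>2 * ?L)"
  have ab: "0 \<le> a" "0 \<le> b"
    using L by (simp_all add: a_def b_def)
  have "ennreal (\<Sum>g\<in>?G. measure trial (correct g))
      \<le> (\<integral>\<^sup>+ xs. \<integral>\<^sup>+ r. ennreal (a + b * ?S xs) \<partial>R \<partial>covariates)"
    unfolding sum_measure_correct_eq_iterated using sum_emeasure_correct_slice_le[OF assms] L
    by (intro nn_integral_mono) (simp add: a_def b_def add_divide_distrib)
  also have "\<dots> = (\<integral>\<^sup>+ xs. ennreal a + ennreal b * ennreal (?S xs) \<partial>covariates)"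
    using ab by (simp add: R.emeasure_space_1 ennreal_plus ennreal_mult sum_nonneg)
  also have "\<dots> = ennreal a + ennreal b * (\<integral>\<^sup>+ xs. ennreal (?S xs) \<partial>covariates)"
    using borel_measurable_Gcls_covariate
    by (subst nn_integral_add) (auto intro!: borel_measurable_sum simp: nn_integral_cmult C.emeasure_space_1)
  also have "\<dots> = ennreal (a + b * (card ?G * n))"
    using ab by (simp add: nn_integral_sum_squares_covariates ennreal_plus ennreal_mult)
  also have "a + b * (card ?G * n) = card ?G * (ln 2 + n / (2 * \<sigma>\<^sup>2)) / ?L"
    using L sigma_pos by (simp add: a_def b_def field_simps)
  finally show ?thesis
    using L by (simp add: ennreal_le_iff)
qed

lemma measure_sample_space_error_ge:
  assumes "1 < card (Gcls p q k)"
  shows "1 - (ln 2 + n / (2 * \<sigma>\<^sup>2)) / ln (card (Gcls p q k))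
           \<le> measure (sample_space p q k n \<sigma> R)
               {(g, xs, es, r) \<in> space (sample_space p q k n \<sigma> R). est (observed n t g xs es) r \<noteq> g}"
proof -
  let ?M = "real (card (Gcls p q k))"
  have "(\<Sum>g\<in>Gcls p q k. measure trial (correct g)) / ?M
      \<le> ?M * (ln 2 + n / (2 * \<sigma>\<^sup>2)) / ln ?M / ?M"
    using sum_measure_correct_le[OF assms] by (rule divide_right_mono) simp
  also have "\<dots> = (ln 2 + n / (2 * \<sigma>\<^sup>2)) / ln ?M"
    using assms by simp
  finally show ?thesis
    by (simp add: measure_sample_space_error)
qed

end

lemma fano_ratio_le_half:
  fixes \<sigma> s M\<^sub>0 M :: real
  assumes "0 < \<sigma>" "0 \<le> s" "0 \<le> M\<^sub>0" "M\<^sub>0 \<le> M" "s \<le> (ln M\<^sub>0 - 2 * ln 2) * \<sigma>\<^sup>2 / 2"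
  shows "1 < M" and "(ln 2 + s / (2 * \<sigma>\<^sup>2)) / ln M \<le> 1 / 2"
proof -
  have "0 \<le> (ln M\<^sub>0 - 2 * ln 2) * \<sigma>\<^sup>2 / 2"
    using assms(2,5) by linarith
  then have "2 * ln 2 \<le> ln M\<^sub>0"
    using assms(1) by (simp add: zero_le_mult_iff)
  moreover have "0 < ln (2 :: real)"
    by simp
  ultimately have "0 < M\<^sub>0"
    using assms(3) by (cases "M\<^sub>0 = 0") simp_all
  then have "ln M\<^sub>0 \<le> ln M" "0 < M"
    using assms(4) by simp_all
  with \<open>2 * ln 2 \<le> ln M\<^sub>0\<close> \<open>0 < ln 2\<close> show "1 < M"
    using ln_gt_zero_iff[of M] by linarith
  define x where "x = s / \<sigma>\<^sup>2"
  have "x \<le> (ln M\<^sub>0 - 2 * ln 2) / 2"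
    using assms(1,5) by (simp add: x_def field_simps)
  moreover have "s / (2 * \<sigma>\<^sup>2) = x / 2"
    by (simp add: x_def)
  moreover have "0 < ln M"
    using \<open>ln M\<^sub>0 \<le> ln M\<close> \<open>2 * ln 2 \<le> ln M\<^sub>0\<close> \<open>0 < ln 2\<close> by linarith
  ultimately show "(ln 2 + s / (2 * \<sigma>\<^sup>2)) / ln M \<le> 1 / 2"
    using \<open>ln M\<^sub>0 \<le> ln M\<close> \<open>2 * ln 2 \<le> ln M\<^sub>0\<close> by (simp add: divide_le_eq)
qed

theorem theorem2:
  fixes p q k n :: nat and \<sigma> :: real and Y :: "real set" and t :: "real \<Rightarrow> real"
    and R :: "'r measure"
    and est :: "(nat \<Rightarrow> (nat \<Rightarrow> real) \<times> real) \<Rightarrow> 'r \<Rightarrow> ((nat \<Rightarrow> real) \<Rightarrow> real)"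
  assumes "0 < p" "0 < q" "0 < k" "k + 1 \<le> p"
    and "0 < \<sigma>"
    and "t \<in> borel_measurable borel" "range t \<subseteq> Y"
    and "prob_space R"
    and "(\<lambda>(s, r). est s r) \<in> measurable (data_space p n \<Otimes>\<^sub>M R) (count_space (Gcls p q k))"
    and "real n \<le> (ln (real q ^ (k + 1) * real (p choose (k + 1))) - 2 * ln 2) * \<sigma>\<^sup>2 / 2"
  shows "measure (sample_space p q k n \<sigma> R)
           {(g, xs, es, r) \<in> space (sample_space p q k n \<sigma> R). est (observed n t g xs es) r \<noteq> g}
         \<ge> 1 / 2"
proof -
  interpret regression_experiment p q k n \<sigma> t R est
    using assms(5,6,8,9) by (rule regression_experiment.intro)
  have "real q ^ (k + 1) * real (p choose (k + 1)) \<le> real (card (Gcls p q k))"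
    using card_Gcls_ge[of q k p] by (simp flip: of_nat_mult of_nat_power)
  from fano_ratio_le_half[OF assms(5) _ _ this assms(10)]
  have "1 < card (Gcls p q k)" "(ln 2 + n / (2 * \<sigma>\<^sup>2)) / ln (card (Gcls p q k)) \<le> 1 / 2"
    by simp_all
  with measure_sample_space_error_ge[OF this(1)] show ?thesis
    by linarith
qed

end
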